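(* In the Cross Model on $\mathbb{Z}_K$ (with $K\ge1$ an integer and $\varepsilon\in(0,1)$), \[ \lim_{n\to\infty}\frac1n\mathbf{E}\big(D^{K,d}(n,0)\big)=1+2\varepsilon\,\nu_{K,\varepsilon}(\bullet,\circ). \]
   Context: Cross Model: $\mathbb{Z}_K=\mathbb{Z}\times[\![-K,K]\!]$ with vertical edges $(i,j)\to(i,j+1)$, horizontal edges $(i,j)\to(i+1,j)$ and diagonal edges $(i,j)\to(i+1,j\pm1)$ (within the strip). Vertical and horizontal edges have length $1$, diagonal edges length $2$. All vertical and diagonal edges are open; each horizontal edge is open with probability $1-\varepsilon$, independently. $D^{K,d}(i,j)$ is the length of a shortest open path in $\mathbb{Z}_K$ from $(0,0)$ to $(i,j)$. $\nu_{K,\varepsilon}$ denotes the stationary distribution of the discrete-time synchronous TASEP on $[\![-K+1,K]\!]$ (state space $\{\bullet,\circ\}^{2K}$, elements written $(y^{-K+1},\dots,y^K)$, $\bullet$ = occupied) in which, from time $t$ to $t+1$ independently: each particle at $j<K$ with site $j+1$ empty at time $t$ moves to $j+1$ with probability $\varepsilon$; a particle enters at the empty site $-K+1$ with probability $\varepsilon$; a particle at site $K$ exits with probability $\varepsilon$. Finally $\nu_{K,\varepsilon}(\bullet,\circ)=\nu_{K,\varepsilon}(y^0=\bullet,\,y^1=\circ)$. *)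

theory Defs
  imports "HOL-Probability.Probability"
begin

text \<open>A configuration omega assigns to each vertex (i,j) whether the horizontal
edge (i,j) -> (i+1,j) is open.\<close>

definition cross_step :: "int \<Rightarrow> (int \<times> int \<Rightarrow> bool) \<Rightarrow> int \<times> int \<Rightarrow> int \<times> int \<Rightarrow> nat \<Rightarrow> bool" where
  "cross_step K \<omega> u v c \<longleftrightarrow>
     -K \<le> snd u \<and> snd u \<le> K \<and> -K \<le> snd v \<and> snd v \<le> K \<and>
     ((fst v = fst u \<and> snd v = snd u + 1 \<and> c = 1) \<or>
      (fst v = fst u + 1 \<and> snd v = snd u \<and> \<omega> u \<and> c = 1) \<or>
      (fst v = fst u + 1 \<and> (snd v = snd u + 1 \<or> snd v = snd u - 1) \<and> c = 2))"

inductive open_path :: "int \<Rightarrow> (int \<times> int \<Rightarrow> bool) \<Rightarrow> int \<times> int \<Rightarrow> int \<times> int \<Rightarrow> nat \<Rightarrow> bool"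
  for K \<omega> where
  refl: "open_path K \<omega> x x 0"
| step: "open_path K \<omega> x y L \<Longrightarrow> cross_step K \<omega> y z c \<Longrightarrow> open_path K \<omega> x z (L + c)"

definition cross_dist :: "int \<Rightarrow> (int \<times> int \<Rightarrow> bool) \<Rightarrow> int \<times> int \<Rightarrow> nat" where
  "cross_dist K \<omega> v = (LEAST L. open_path K \<omega> (0,0) v L)"

definition cross_measure :: "real \<Rightarrow> (int \<times> int \<Rightarrow> bool) measure" where
  "cross_measure \<epsilon> = (\<Pi>\<^sub>M e\<in>(UNIV :: (int \<times> int) set). measure_pmf (bernoulli_pmf (1 - \<epsilon>)))"

text \<open>States: occupation functions supported on [-K+1, K] (True = occupied).\<close>
definition tasep_states :: "int \<Rightarrow> (int \<Rightarrow> bool) set" where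
  "tasep_states K = {y. \<forall>j. y j \<longrightarrow> -K + 1 \<le> j \<and> j \<le> K}"

text \<open>Active bonds of state y: bond -K = entry at site -K+1 (if empty),
bond b in [-K+1,K-1] = jump b -> b+1 (if b occupied and b+1 empty),
bond K = exit from site K (if occupied).\<close>
definition tasep_active :: "int \<Rightarrow> (int \<Rightarrow> bool) \<Rightarrow> int set" where
  "tasep_active K y = {b. (b = -K \<and> \<not> y (-K + 1)) \<or>
                          (-K + 1 \<le> b \<and> b < K \<and> y b \<and> \<not> y (b + 1)) \<or>
                          (b = K \<and> y K)}"

definition tasep_update :: "int \<Rightarrow> (int \<Rightarrow> bool) \<Rightarrow> int set \<Rightarrow> (int \<Rightarrow> bool)" where
  "tasep_update K y F = (\<lambda>j. if -K + 1 \<le> j \<and> j \<le> K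
                               then (if y j then j \<notin> F else j - 1 \<in> F)
                               else False)"

definition tasep_P :: "int \<Rightarrow> real \<Rightarrow> (int \<Rightarrow> bool) \<Rightarrow> (int \<Rightarrow> bool) \<Rightarrow> real" where
  "tasep_P K \<epsilon> y y' =
     (\<Sum>F\<in>Pow (tasep_active K y).
        if tasep_update K y F = y'
        then \<epsilon> ^ card F * (1 - \<epsilon>) ^ (card (tasep_active K y) - card F) else 0)"

definition tasep_stationary :: "int \<Rightarrow> real \<Rightarrow> ((int \<Rightarrow> bool) \<Rightarrow> real) \<Rightarrow> bool" where
  "tasep_stationary K \<epsilon> \<nu> \<longleftrightarrow>
     (\<forall>y\<in>tasep_states K. 0 \<le> \<nu> y) \<and>
     (\<Sum>y\<in>tasep_states K. \<nu> y) = 1 \<and>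
     (\<forall>y'\<in>tasep_states K. \<nu> y' = (\<Sum>y\<in>tasep_states K. \<nu> y * tasep_P K \<epsilon> y y'))"

text \<open>nu(bullet, circ) = nu(y^0 = occupied, y^1 = empty).\<close>
definition nu_occ_emp :: "int \<Rightarrow> ((int \<Rightarrow> bool) \<Rightarrow> real) \<Rightarrow> real" where
  "nu_occ_emp K \<nu> = (\<Sum>y\<in>{y\<in>tasep_states K. y 0 \<and> \<not> y 1}. \<nu> y)"

end

theory Submission
  imports Defs
begin

text \<open>Read the strip column by column as time. The horizontal edges of column \<open>m\<close> serve as the
  coins of the TASEP at time \<open>m\<close>: an active bond fires exactly when its horizontal edge is closed.
  Encode a TASEP state by its height profile and let \<open>V(m, j)\<close> (\<open>coupled_height\<close>) grow by 1 at
  every step and by 2 more where a bond fires. Since active bonds are the strict local minima of the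
  profile, every open path from the origin to \<open>(m, j)\<close> has length at least \<open>V(m, j)\<close>, and for
  \<open>m \<ge> K\<close> some open path has length at most \<open>V(m, j) + 3K\<close>. So \<open>E D(n, 0) = E V(n, 0) + O(K)\<close>,
  while \<open>V(n, 0)\<close> increases by \<open>1 + 2 [bond 0 fires]\<close>; started in the stationary law, bond 0
  fires with probability \<open>\<epsilon> \<nu>(\<bullet>, \<circ>)\<close> at every step.\<close>

section \<open>Height profiles of TASEP states\<close>

text \<open>A particle is a down-step and an empty site an up-step; the profile is normalised at site 0.\<close>

definition slope :: "(int \<Rightarrow> bool) \<Rightarrow> int \<Rightarrow> int" where
  "slope y k = (if y k then -1 else 1)"

definition tasep_height :: "(int \<Rightarrow> bool) \<Rightarrow> int \<Rightarrow> int" where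
  "tasep_height y j = (\<Sum>k\<in>{1..j}. slope y k) - (\<Sum>k\<in>{j+1..0}. slope y k)"

lemma tasep_height_0 [simp]: "tasep_height y 0 = 0"
  unfolding tasep_height_def by simp

lemma tasep_height_diff: "tasep_height y j = tasep_height y (j - 1) + slope y j"
proof (cases "j \<ge> 1")
  case True
  then have "{1..j} = insert j {1..j-1}" "{j+1..0} = {}" "{j-1+1..0} = {}" by auto
  then show ?thesis unfolding tasep_height_def by simp
next
  case False
  then have "{j-1+1..0} = insert j {j+1..0}" "{1..j} = {}" "{1..j-1} = {}" by auto
  then show ?thesis unfolding tasep_height_def by simp
qed

lemma tasep_height_succ_cases: "tasep_height y (j + 1) = tasep_height y j + 1 \<or> tasep_height y (j + 1) = tasep_height y j - 1"
  using tasep_height_diff[of y "j + 1"] unfolding slope_def by auto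

lemma abs_tasep_height_le: "\<bar>tasep_height y j\<bar> \<le> \<bar>j\<bar>"
proof (induction j rule: int_induct[where k = 0])
  case (step1 i)
  then show ?case using tasep_height_succ_cases[of y i] by auto
next
  case (step2 i)
  then show ?case using tasep_height_succ_cases[of y "i - 1"] by auto
qed simp

definition fired :: "int \<Rightarrow> (int \<Rightarrow> bool) \<Rightarrow> (int \<Rightarrow> bool) \<Rightarrow> int set" where
  "fired K y c = {b \<in> tasep_active K y. \<not> c b}"

definition tasep_step :: "int \<Rightarrow> (int \<Rightarrow> bool) \<Rightarrow> (int \<Rightarrow> bool) \<Rightarrow> int \<Rightarrow> bool" where
  "tasep_step K y c = tasep_update K y (fired K y c)"

lemma tasep_active_subset: "0 \<le> K \<Longrightarrow> tasep_active K y \<subseteq> {-K..K}"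
  unfolding tasep_active_def by auto

lemma tasep_update_in_states: "tasep_update K y F \<in> tasep_states K"
  unfolding tasep_update_def tasep_states_def by auto

lemma fired_cong:
  assumes "0 \<le> K" "\<And>b. b \<in> {-K..K} \<Longrightarrow> c b = c' b"
  shows "fired K y c = fired K y c'"
  using assms tasep_active_subset[OF assms(1), of y] unfolding fired_def by blast

lemma tasep_step_cong:
  assumes "0 \<le> K" "\<And>b. b \<in> {-K..K} \<Longrightarrow> c b = c' b"
  shows "tasep_step K y c = tasep_step K y c'"
  unfolding tasep_step_def using fired_cong[OF assms] by simp

lemma slope_tasep_step:
  assumes "-K + 1 \<le> j" "j \<le> K"
  shows "slope (tasep_step K y c) j = slope y j + 2 * of_bool (j \<in> fired K y c) - 2 * of_bool (j - 1 \<in> fired K y c)"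
proof (cases "y j")
  case True
  then have "j - 1 \<notin> tasep_active K y"
    using assms unfolding tasep_active_def by (cases "j = -K + 1") auto
  with True assms show ?thesis
    unfolding slope_def tasep_step_def tasep_update_def fired_def by auto
next
  case False
  then have "j \<notin> tasep_active K y" using assms unfolding tasep_active_def by auto
  with False assms show ?thesis
    unfolding slope_def tasep_step_def tasep_update_def fired_def by auto
qed

lemma tasep_height_tasep_step:
  assumes "-K \<le> j" "j \<le> K"
  shows "tasep_height (tasep_step K y c) j = tasep_height y j + 2 * of_bool (j \<in> fired K y c) - 2 * of_bool (0 \<in> fired K y c)"
  using assms
proof (induction j rule: int_induct[where k = 0])
  case (step1 i)
  then show ?case
    using tasep_height_diff[of _ "i + 1"] slope_tasep_step[of K "i + 1" y c] by simp
next
  case (step2 i)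
  then show ?case
    using tasep_height_diff[of _ i] slope_tasep_step[of K i y c] by simp
qed simp

lemma tasep_height_around_active:
  assumes "j \<in> tasep_active K y"
  shows "(-K < j \<longrightarrow> tasep_height y (j - 1) = tasep_height y j + 1) \<and>
    (j < K \<longrightarrow> tasep_height y (j + 1) = tasep_height y j + 1)"
  using assms tasep_height_diff[of y j] tasep_height_diff[of y "j + 1"]
  unfolding tasep_active_def slope_def by (auto simp: add.commute)

lemma tasep_height_around_inactive:
  assumes "K \<ge> 1" "-K \<le> j" "j \<le> K" "j \<notin> tasep_active K y"
  shows "(-K < j \<and> tasep_height y (j - 1) = tasep_height y j - 1) \<or>
    (j < K \<and> tasep_height y (j + 1) = tasep_height y j - 1)"
proof -
  have "(-K < j \<and> \<not> y j) \<or> (j < K \<and> y (j + 1))"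
    using assms unfolding tasep_active_def by (cases "j = -K"; cases "j = K") (auto simp: add.commute)
  then show ?thesis
    using tasep_height_diff[of y j] tasep_height_diff[of y "j + 1"] unfolding slope_def by auto
qed

section \<open>The TASEP driven by the environment and passage times\<close>

definition strip_column :: "(int \<times> int \<Rightarrow> bool) \<Rightarrow> nat \<Rightarrow> int \<Rightarrow> bool" where
  "strip_column \<omega> m j = \<omega> (int m, j)"

fun tasep_run :: "int \<Rightarrow> (int \<times> int \<Rightarrow> bool) \<Rightarrow> (int \<Rightarrow> bool) \<Rightarrow> nat \<Rightarrow> int \<Rightarrow> bool" where
  "tasep_run K \<omega> y 0 = y"
| "tasep_run K \<omega> y (Suc m) = tasep_step K (tasep_run K \<omega> y m) (strip_column \<omega> m)"

fun coupled_height :: "int \<Rightarrow> (int \<times> int \<Rightarrow> bool) \<Rightarrow> (int \<Rightarrow> bool) \<Rightarrow> nat \<Rightarrow> int \<Rightarrow> int" where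
  "coupled_height K \<omega> y 0 j = tasep_height y j"
| "coupled_height K \<omega> y (Suc m) j =
     coupled_height K \<omega> y m j + 1 + 2 * of_bool (j \<in> fired K (tasep_run K \<omega> y m) (strip_column \<omega> m))"

lemma coupled_height_eq:
  assumes "-K \<le> j" "j \<le> K"
  shows "coupled_height K \<omega> y m j = coupled_height K \<omega> y m 0 + tasep_height (tasep_run K \<omega> y m) j"
  by (induction m) (simp_all add: tasep_height_tasep_step[OF assms])

lemma coupled_height_ge: "tasep_height y j + int m \<le> coupled_height K \<omega> y m j"
  by (induction m) auto

lemma coupled_height_cross_step:
  assumes K: "K \<ge> 1" and step: "cross_step K \<omega> (int m, j) (i', j') c"
  shows "coupled_height K \<omega> y (nat i') j' \<le> coupled_height K \<omega> y m j + int c"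
proof -
  let ?y = "tasep_run K \<omega> y m" and ?V = "coupled_height K \<omega> y m"
  have range: "-K \<le> j" "j \<le> K" "-K \<le> j'" "j' \<le> K" using step unfolding cross_step_def by auto
  have V: "?V j = ?V 0 + tasep_height ?y j" "?V j' = ?V 0 + tasep_height ?y j'"
    using coupled_height_eq range by blast+
  consider (vertical) "i' = int m" "j' = j + 1" "c = 1"
    | (horizontal) "i' = int m + 1" "j' = j" "\<omega> (int m, j)" "c = 1"
    | (diagonal) "i' = int m + 1" "j' = j + 1 \<or> j' = j - 1" "c = 2"
    using step unfolding cross_step_def by auto
  then show ?thesis
  proof cases
    case vertical
    then show ?thesis using V tasep_height_succ_cases[of ?y j] by auto
  next
    case horizontal
    then have "j \<notin> fired K ?y (strip_column \<omega> m)" unfolding fired_def strip_column_def by auto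
    then show ?thesis using horizontal by (simp add: nat_add_distrib)
  next
    case diagonal
    have "tasep_height ?y j' + 2 * of_bool (j' \<in> fired K ?y (strip_column \<omega> m)) \<le> tasep_height ?y j + 1"
    proof (cases "j' \<in> fired K ?y (strip_column \<omega> m)")
      case True
      then have "j' \<in> tasep_active K ?y" unfolding fired_def by auto
      then show ?thesis using tasep_height_around_active[of j' K ?y] diagonal range by auto
    next
      case False
      then show ?thesis
        using diagonal tasep_height_succ_cases[of ?y j] tasep_height_succ_cases[of ?y "j - 1"] by auto
    qed
    then show ?thesis using diagonal V by (auto simp: nat_add_distrib)
  qed
qed

lemma coupled_height_le_path_length:
  assumes "open_path K \<omega> (0, 0) z L" "K \<ge> 1"
  shows "0 \<le> fst z \<and> coupled_height K \<omega> y (nat (fst z)) (snd z) \<le> int L"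
  using assms
proof (induction "(0::int, 0::int)" z L rule: open_path.induct)
  case refl
  then show ?case by simp
next
  case (step u L z c)
  define m where "m = nat (fst u)"
  define j where "j = snd u"
  have IH: "0 \<le> fst u" "coupled_height K \<omega> y (nat (fst u)) (snd u) \<le> int L"
    using step by auto
  then have u: "u = (int m, j)" unfolding m_def j_def by simp
  have "cross_step K \<omega> (int m, j) (fst z, snd z) c" using step u by simp
  then have "coupled_height K \<omega> y (nat (fst z)) (snd z) \<le> coupled_height K \<omega> y m j + int c"
    and "0 \<le> fst z"
    using coupled_height_cross_step[OF step.prems] unfolding cross_step_def by auto
  then show ?case using IH u by auto
qed

lemma open_path_to_column:
  assumes "K \<ge> 1" "-K \<le> j" "j \<le> K" "- int m \<le> j"
  shows "\<exists>L. open_path K \<omega> (0, 0) (int m, j) L \<and> L \<le> 2 * m + nat K"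
  using assms(2-)
proof (induction m arbitrary: j)
  case 0
  have "open_path K \<omega> (0, 0) (0, int k) k" if "int k \<le> K" for k
    using that
  proof (induction k)
    case (Suc k)
    have "cross_step K \<omega> (0, int k) (0, int (Suc k)) 1"
      using Suc.prems unfolding cross_step_def by simp
    then show ?case using open_path.step[OF Suc.IH] Suc.prems by fastforce
  qed (simp add: open_path.refl)
  from this[of "nat j"] show ?case using 0 by auto
next
  case (Suc m)
  define j' where "j' = (if j < K then j + 1 else j - 1)"
  have "-K \<le> j'" "j' \<le> K" "- int m \<le> j'" using Suc.prems assms(1) unfolding j'_def by auto
  then obtain L where L: "open_path K \<omega> (0, 0) (int m, j') L" "L \<le> 2 * m + nat K"
    using Suc.IH by blast
  have "cross_step K \<omega> (int m, j') (int (Suc m), j) 2"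
    using Suc.prems assms(1) unfolding j'_def cross_step_def by auto
  then have "open_path K \<omega> (0, 0) (int (Suc m), j) (L + 2)" by (rule open_path.step[OF L(1)])
  then show ?case using L(2) by auto
qed

lemma coupled_height_witness:
  assumes K: "K \<ge> 1" and range: "-K \<le> j" "j \<le> K"
  shows "\<exists>j' c. cross_step K \<omega> (int m, j') (int m + 1, j) c \<and>
    coupled_height K \<omega> y (Suc m) j = coupled_height K \<omega> y m j' + int c"
proof -
  let ?y = "tasep_run K \<omega> y m" and ?c = "strip_column \<omega> m" and ?V = "coupled_height K \<omega> y"
  have V: "?V m i = ?V m 0 + tasep_height ?y i" if "-K \<le> i" "i \<le> K" for i
    using coupled_height_eq that by blast
  have diagonal: "\<exists>j' c. cross_step K \<omega> (int m, j') (int m + 1, j) c \<and> ?V (Suc m) j = ?V m j' + int c"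
    if "i = j + 1 \<or> i = j - 1" "-K \<le> i" "i \<le> K" "?V (Suc m) j = ?V m i + 2" for i
    using that range unfolding cross_step_def by (intro exI[of _ i] exI[of _ 2]) auto
  show ?thesis
  proof (cases "j \<in> fired K ?y ?c")
    case fired: True
    then have active: "j \<in> tasep_active K ?y" unfolding fired_def by auto
    show ?thesis
    proof (cases "j < K")
      case True
      then show ?thesis
        using diagonal[of "j + 1"] tasep_height_around_active[OF active] V[OF range] V[of "j + 1"] fired range
        by simp
    next
      case False
      then show ?thesis
        using diagonal[of "j - 1"] tasep_height_around_active[OF active] V[OF range] V[of "j - 1"] fired range K
        by simp
    qed
  next
    case not_fired: False
    show ?thesis
    proof (cases "\<omega> (int m, j)")
      case True
      then have "cross_step K \<omega> (int m, j) (int m + 1, j) 1" using range unfolding cross_step_def by simp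
      then show ?thesis using not_fired by (intro exI[of _ j] exI[of _ 1]) simp
    next
      case False
      then have "j \<notin> tasep_active K ?y" using not_fired unfolding fired_def strip_column_def by auto
      from tasep_height_around_inactive[OF K range this] show ?thesis
      proof (elim disjE conjE)
        assume "-K < j" "tasep_height ?y (j - 1) = tasep_height ?y j - 1"
        then show ?thesis using diagonal[of "j - 1"] V[OF range] V[of "j - 1"] not_fired range by simp
      next
        assume "j < K" "tasep_height ?y (j + 1) = tasep_height ?y j - 1"
        then show ?thesis using diagonal[of "j + 1"] V[OF range] V[of "j + 1"] not_fired range by simp
      qed
    qed
  qed
qed

lemma path_length_le_coupled_height:
  assumes K: "K \<ge> 1" and m: "nat K \<le> m"
  shows "-K \<le> j \<Longrightarrow> j \<le> K \<Longrightarrow>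
    \<exists>L. open_path K \<omega> (0, 0) (int m, j) L \<and> int L \<le> coupled_height K \<omega> y m j + 3 * K"
  using m
proof (induction m arbitrary: j rule: nat_induct_at_least)
  case base
  obtain L where L: "open_path K \<omega> (0, 0) (int (nat K), j) L" "L \<le> 2 * nat K + nat K"
    using open_path_to_column[OF K base, where m = "nat K" and \<omega> = \<omega>] base K by auto
  have "0 \<le> coupled_height K \<omega> y (nat K) j"
    using coupled_height_ge[of y j "nat K" K \<omega>] abs_tasep_height_le[of y j] base K by auto
  then show ?case using L K by (intro exI[of _ L]) auto
next
  case (Suc m)
  obtain j' c where w: "cross_step K \<omega> (int m, j') (int m + 1, j) c"
    "coupled_height K \<omega> y (Suc m) j = coupled_height K \<omega> y m j' + int c"
    using coupled_height_witness[OF K Suc.prems] by blast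
  moreover have "-K \<le> j'" "j' \<le> K" using w(1) unfolding cross_step_def by auto
  then obtain L where "open_path K \<omega> (0, 0) (int m, j') L" "int L \<le> coupled_height K \<omega> y m j' + 3 * K"
    using Suc.IH by blast
  moreover note open_path.step[OF this(1) w(1)]
  ultimately show ?case by (intro exI[of _ "L + c"]) (auto simp: add.commute)
qed

lemma cross_dist_bounds:
  assumes "K \<ge> 1" "nat K \<le> n"
  shows "coupled_height K \<omega> y n 0 \<le> int (cross_dist K \<omega> (int n, 0))"
    and "int (cross_dist K \<omega> (int n, 0)) \<le> coupled_height K \<omega> y n 0 + 3 * K"
proof -
  obtain L where L: "open_path K \<omega> (0, 0) (int n, 0) L" "int L \<le> coupled_height K \<omega> y n 0 + 3 * K"
    using path_length_le_coupled_height[OF assms, of 0] assms(1) by auto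
  have "open_path K \<omega> (0, 0) (int n, 0) (cross_dist K \<omega> (int n, 0))"
    unfolding cross_dist_def using L(1) by (rule LeastI)
  from coupled_height_le_path_length[OF this assms(1)]
  show "coupled_height K \<omega> y n 0 \<le> int (cross_dist K \<omega> (int n, 0))" by simp
  have "cross_dist K \<omega> (int n, 0) \<le> L" unfolding cross_dist_def using L(1) by (rule Least_le)
  then show "int (cross_dist K \<omega> (int n, 0)) \<le> coupled_height K \<omega> y n 0 + 3 * K" using L(2) by linarith
qed

section \<open>Functions of finitely many coordinates of a product of pmfs\<close>

definition depends_only_on :: "'i set \<Rightarrow> (('i \<Rightarrow> 'b) \<Rightarrow> 'c) \<Rightarrow> bool" where
  "depends_only_on J f \<longleftrightarrow> (\<forall>\<omega> \<omega>'. (\<forall>i\<in>J. \<omega> i = \<omega>' i) \<longrightarrow> f \<omega> = f \<omega>')"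

lemma depends_only_onI: "(\<And>\<omega> \<omega>'. (\<And>i. i \<in> J \<Longrightarrow> \<omega> i = \<omega>' i) \<Longrightarrow> f \<omega> = f \<omega>') \<Longrightarrow> depends_only_on J f"
  unfolding depends_only_on_def by blast

lemma depends_only_onD: "depends_only_on J f \<Longrightarrow> (\<And>i. i \<in> J \<Longrightarrow> \<omega> i = \<omega>' i) \<Longrightarrow> f \<omega> = f \<omega>'"
  unfolding depends_only_on_def by blast

lemma depends_only_on_comp: "depends_only_on J f \<Longrightarrow> depends_only_on J (\<lambda>\<omega>. g (f \<omega>))"
  unfolding depends_only_on_def by metis

lemma depends_only_on_restrict:
  assumes "depends_only_on J f"
  shows "f \<omega> = f (\<lambda>i. if i \<in> J then restrict \<omega> J i else d)"
  using assms by (rule depends_only_onD) simp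

lemma sets_PiM_measure_pmf_finite:
  fixes P :: "'i \<Rightarrow> 'b::finite pmf"
  assumes "finite J" "X \<subseteq> space (PiM J (\<lambda>i. measure_pmf (P i)))"
  shows "X \<in> sets (PiM J (\<lambda>i. measure_pmf (P i)))"
proof -
  have X: "X \<subseteq> PiE J (\<lambda>_. UNIV)" using assms(2) by (simp add: space_PiM)
  then have "finite X" by (rule finite_subset) (simp add: assms(1) finite_PiE)
  have "PiE J (\<lambda>i. {x i}) = {x}" if "x \<in> X" for x
    using X that by (intro PiE_singleton) (auto simp: PiE_def)
  then have "X = (\<Union>x\<in>X. PiE J (\<lambda>i. {x i}))" by auto
  also have "\<dots> \<in> sets (PiM J (\<lambda>i. measure_pmf (P i)))"
    using \<open>finite X\<close> assms(1) by (intro sets.finite_UN sets_PiM_I_finite) auto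
  finally show ?thesis .
qed

lemma integrable_PiM_measure_pmf_finite:
  fixes P :: "'i \<Rightarrow> 'b::finite pmf" and f :: "('i \<Rightarrow> 'b) \<Rightarrow> real"
  assumes J: "finite J" and f: "depends_only_on J f"
  shows "integrable (PiM UNIV (\<lambda>i. measure_pmf (P i))) f"
proof -
  interpret prob_space "PiM UNIV (\<lambda>i. measure_pmf (P i))"
    by (rule prob_space_PiM) (rule measure_pmf.prob_space_axioms)
  define g where "g x = f (\<lambda>i. if i \<in> J then x i else undefined)" for x
  have fg: "f = (\<lambda>\<omega>. g (restrict \<omega> J))"
    using depends_only_on_restrict[OF f] unfolding g_def by auto
  have "g \<in> borel_measurable (PiM J (\<lambda>i. measure_pmf (P i)))"
    by (rule borel_measurableI) (auto intro: sets_PiM_measure_pmf_finite[OF J])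
  then have "f \<in> borel_measurable (PiM UNIV (\<lambda>i. measure_pmf (P i)))"
    unfolding fg by (rule measurable_compose[OF measurable_restrict_subset, rotated]) simp
  moreover have "finite (range f)"
  proof (rule finite_subset)
    show "range f \<subseteq> g ` PiE J (\<lambda>_. UNIV)" unfolding fg by auto
  qed (simp add: J finite_PiE)
  then have "\<bar>f \<omega>\<bar> \<le> Max (abs ` range f)" for \<omega> by (intro Max_ge) auto
  ultimately show ?thesis by (intro integrable_const_bound[where B = "Max (abs ` range f)"]) auto
qed

lemma distr_restrict_Pi_pmf:
  assumes "finite J"
  shows "distr (measure_pmf (Pi_pmf J d P)) (PiM J (\<lambda>i. measure_pmf (P i))) (\<lambda>\<omega>. restrict \<omega> J) =
    PiM J (\<lambda>i. measure_pmf (P i))"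
proof -
  interpret product_prob_space "\<lambda>i. measure_pmf (P i)" J
    by (rule product_prob_spaceI) (rule measure_pmf.prob_space_axioms)
  show ?thesis
  proof (rule PiM_eqI)
    fix A assume A: "\<And>i. i \<in> J \<Longrightarrow> A i \<in> sets (measure_pmf (P i))"
    have PiE_sets: "PiE J A \<in> sets (PiM J (\<lambda>i. measure_pmf (P i)))"
      using A by (intro sets_PiM_I_finite assms) auto
    have "emeasure (distr (measure_pmf (Pi_pmf J d P)) (PiM J (\<lambda>i. measure_pmf (P i))) (\<lambda>\<omega>. restrict \<omega> J)) (PiE J A) =
        emeasure (measure_pmf (Pi_pmf J d P)) ((\<lambda>\<omega>. restrict \<omega> J) -` PiE J A)"
      using PiE_sets by (subst emeasure_distr) (auto simp: space_PiM)
    also have "\<dots> = emeasure (measure_pmf (Pi_pmf J d P)) (PiE_dflt J d A)"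
    proof (intro emeasure_eq_AE AE_pmfI)
      fix \<omega> assume "\<omega> \<in> set_pmf (Pi_pmf J d P)"
      then have "\<forall>i. i \<notin> J \<longrightarrow> \<omega> i = d" using set_Pi_pmf_subset[OF assms, of d P] by blast
      then show "(\<omega> \<in> (\<lambda>\<omega>. restrict \<omega> J) -` PiE J A) = (\<omega> \<in> PiE_dflt J d A)"
        unfolding PiE_dflt_def by (auto simp: restrict_PiE_iff)
    qed auto
    also have "\<dots> = (\<Prod>i\<in>J. emeasure (measure_pmf (P i)) (A i))"
      by (simp add: measure_pmf.emeasure_eq_measure measure_Pi_pmf_PiE_dflt assms prod_ennreal)
    finally show "emeasure (distr (measure_pmf (Pi_pmf J d P)) (PiM J (\<lambda>i. measure_pmf (P i))) (\<lambda>\<omega>. restrict \<omega> J)) (PiE J A) =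
        (\<Prod>i\<in>J. emeasure (measure_pmf (P i)) (A i))" .
  qed (simp_all add: assms)
qed

lemma integral_PiM_eq_integral_Pi_pmf:
  fixes P :: "'i \<Rightarrow> 'b::finite pmf" and f :: "('i \<Rightarrow> 'b) \<Rightarrow> real"
  assumes J: "finite J" and f: "depends_only_on J f"
  shows "(\<integral>\<omega>. f \<omega> \<partial>PiM UNIV (\<lambda>i. measure_pmf (P i))) = (\<integral>\<omega>. f \<omega> \<partial>Pi_pmf J d P)"
proof -
  interpret product_prob_space "\<lambda>i. measure_pmf (P i)" UNIV
    by (rule product_prob_spaceI) (rule measure_pmf.prob_space_axioms)
  define g where "g x = f (\<lambda>i. if i \<in> J then x i else d)" for x
  have fg: "f \<omega> = g (restrict \<omega> J)" for \<omega>
    using depends_only_on_restrict[OF f] unfolding g_def by auto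
  have g: "g \<in> borel_measurable (PiM J (\<lambda>i. measure_pmf (P i)))"
    by (rule borel_measurableI) (auto intro: sets_PiM_measure_pmf_finite[OF J])
  have "(\<integral>\<omega>. f \<omega> \<partial>PiM UNIV (\<lambda>i. measure_pmf (P i))) =
      (\<integral>x. g x \<partial>distr (PiM UNIV (\<lambda>i. measure_pmf (P i))) (PiM J (\<lambda>i. measure_pmf (P i))) (\<lambda>\<omega>. restrict \<omega> J))"
    unfolding fg by (rule integral_distr[symmetric, OF measurable_restrict_subset g]) simp
  also have "\<dots> = (\<integral>x. g x \<partial>distr (measure_pmf (Pi_pmf J d P)) (PiM J (\<lambda>i. measure_pmf (P i))) (\<lambda>\<omega>. restrict \<omega> J))"
    by (simp add: distr_PiM_restrict_finite J distr_restrict_Pi_pmf)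
  also have "\<dots> = (\<integral>\<omega>. f \<omega> \<partial>Pi_pmf J d P)"
    unfolding fg by (rule integral_distr[OF _ g]) (auto simp: space_PiM)
  finally show ?thesis .
qed

lemma finite_set_Pi_pmf: "finite A \<Longrightarrow> finite (set_pmf (Pi_pmf A d (P :: _ \<Rightarrow> 'b::finite pmf)))"
  by (rule finite_subset[OF set_Pi_pmf_subset']) auto

lemma integral_pair_pmf_finite:
  fixes F :: "'a \<times> 'b \<Rightarrow> real"
  assumes "finite (set_pmf A)" "finite (set_pmf B)"
  shows "(\<integral>x. F x \<partial>pair_pmf A B) = (\<integral>a. (\<integral>b. F (a, b) \<partial>B) \<partial>A)"
proof -
  have "(\<integral>x. F x \<partial>pair_pmf A B) = (\<Sum>(a, b)\<in>set_pmf A \<times> set_pmf B. F (a, b) * (pmf A a * pmf B b))"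
    using assms by (subst integral_measure_pmf_real[of "set_pmf A \<times> set_pmf B"])
      (auto simp: pmf_pair intro!: sum.cong)
  also have "\<dots> = (\<Sum>a\<in>set_pmf A. (\<Sum>b\<in>set_pmf B. F (a, b) * pmf B b) * pmf A a)"
    by (simp add: sum.cartesian_product[symmetric] sum_distrib_left sum_distrib_right mult_ac)
  also have "\<dots> = (\<integral>a. (\<integral>b. F (a, b) \<partial>B) \<partial>A)"
    using assms by (simp add: integral_measure_pmf_real[of "set_pmf _"] mult_ac)
  finally show ?thesis .
qed

lemma integral_Pi_pmf_union:
  fixes P :: "'i \<Rightarrow> 'b::finite pmf" and F :: "('i \<Rightarrow> 'b) \<Rightarrow> real"
  assumes "finite A" "finite B" "A \<inter> B = {}"
  shows "(\<integral>\<omega>. F \<omega> \<partial>Pi_pmf (A \<union> B) d P) =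
    (\<integral>x. (\<integral>z. F (\<lambda>i. if i \<in> A then x i else z i) \<partial>Pi_pmf B d P) \<partial>Pi_pmf A d P)"
proof -
  let ?merge = "\<lambda>(x, z) i. if i \<in> A then x i else z i"
  have "(\<integral>\<omega>. F \<omega> \<partial>Pi_pmf (A \<union> B) d P) = (\<integral>xz. F (?merge xz) \<partial>pair_pmf (Pi_pmf A d P) (Pi_pmf B d P))"
    unfolding Pi_pmf_union[OF assms] by simp
  also have "\<dots> = (\<integral>x. (\<integral>z. F (?merge (x, z)) \<partial>Pi_pmf B d P) \<partial>Pi_pmf A d P)"
    by (rule integral_pair_pmf_finite) (simp_all add: finite_set_Pi_pmf assms)
  finally show ?thesis by simp
qed

lemma pmf_Pi_pmf_bernoulli_failures:
  assumes A: "finite A" and F: "F \<subseteq> A" and p: "0 < p" "p < 1"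
  shows "pmf (map_pmf (\<lambda>b. {x\<in>A. \<not> b x}) (Pi_pmf A d (\<lambda>_. bernoulli_pmf p))) F =
    (1 - p) ^ card F * p ^ (card A - card F)"
proof -
  let ?Q = "Pi_pmf A d (\<lambda>_. bernoulli_pmf p)"
  define b where "b x = (if x \<in> A then x \<notin> F else d)" for x
  have support: "set_pmf ?Q = {b. \<forall>x. x \<notin> A \<longrightarrow> b x = d}"
    using set_Pi_pmf[OF A, of d "\<lambda>_. bernoulli_pmf p"] p by (auto simp: PiE_dflt_def)
  have "inj_on (\<lambda>b. {x\<in>A. \<not> b x}) (set_pmf ?Q)"
  proof (rule inj_onI, rule ext)
    fix f g x assume "f \<in> set_pmf ?Q" "g \<in> set_pmf ?Q" "{x\<in>A. \<not> f x} = {x\<in>A. \<not> g x}"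
    then show "f x = g x" unfolding support by (cases "x \<in> A") (auto simp: set_eq_iff)
  qed
  moreover have "b \<in> set_pmf ?Q" "{x\<in>A. \<not> b x} = F" unfolding support b_def using F by auto
  ultimately have "pmf (map_pmf (\<lambda>b. {x\<in>A. \<not> b x}) ?Q) F = (\<Prod>x\<in>A. pmf (bernoulli_pmf p) (b x))"
    using pmf_map_inj by (fastforce simp: pmf_Pi[OF A] b_def)
  also have "\<dots> = (\<Prod>x\<in>A. if x \<in> F then 1 - p else p)"
    using p by (intro prod.cong) (auto simp: b_def)
  also have "\<dots> = (1 - p) ^ card F * p ^ (card A - card F)"
    using A F by (simp add: prod.If_cases Int_absorb1 Diff_eq[symmetric] card_Diff_subset finite_subset)
  finally show ?thesis .
qed

section \<open>Expectations in the cross model\<close>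

definition strip_block :: "int \<Rightarrow> nat \<Rightarrow> (int \<times> int) set" where
  "strip_block K n = {0..<int n} \<times> {-K..K}"

definition column_pmf :: "int \<Rightarrow> real \<Rightarrow> (int \<Rightarrow> bool) pmf" where
  "column_pmf K \<epsilon> = Pi_pmf {-K..K} False (\<lambda>_. bernoulli_pmf (1 - \<epsilon>))"

lemma finite_strip_block [simp]: "finite (strip_block K n)"
  unfolding strip_block_def by simp

lemma strip_block_Suc: "strip_block K (Suc m) = strip_block K m \<union> {int m} \<times> {-K..K}"
  unfolding strip_block_def by auto

lemma depends_only_on_tasep_run:
  assumes "0 \<le> K"
  shows "depends_only_on (strip_block K m) (\<lambda>\<omega>. tasep_run K \<omega> y m)"
proof (induction m)
  case (Suc m)
  show ?case
  proof (rule depends_only_onI)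
    fix \<omega> \<omega>' :: "int \<times> int \<Rightarrow> bool" assume agree: "\<And>e. e \<in> strip_block K (Suc m) \<Longrightarrow> \<omega> e = \<omega>' e"
    then have "tasep_run K \<omega> y m = tasep_run K \<omega>' y m"
      by (intro depends_only_onD[OF Suc.IH]) (simp add: strip_block_Suc)
    moreover have "fired K (tasep_run K \<omega>' y m) (strip_column \<omega> m) = fired K (tasep_run K \<omega>' y m) (strip_column \<omega>' m)"
      using agree by (intro fired_cong[OF assms]) (simp add: strip_column_def strip_block_Suc)
    ultimately show "tasep_run K \<omega> y (Suc m) = tasep_run K \<omega>' y (Suc m)" by (simp add: tasep_step_def)
  qed
qed (simp add: depends_only_on_def)

lemma depends_only_on_tasep_run_column:
  assumes "0 \<le> K" and h: "\<And>y c c'. (\<And>b. b \<in> {-K..K} \<Longrightarrow> c b = c' b) \<Longrightarrow> h y c = h y c'"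
  shows "depends_only_on (strip_block K (Suc m)) (\<lambda>\<omega>. h (tasep_run K \<omega> y m) (strip_column \<omega> m))"
proof (rule depends_only_onI)
  fix \<omega> \<omega>' :: "int \<times> int \<Rightarrow> bool" assume agree: "\<And>e. e \<in> strip_block K (Suc m) \<Longrightarrow> \<omega> e = \<omega>' e"
  then have "tasep_run K \<omega> y m = tasep_run K \<omega>' y m"
    by (intro depends_only_onD[OF depends_only_on_tasep_run[OF assms(1)]]) (simp add: strip_block_Suc)
  moreover have "h (tasep_run K \<omega>' y m) (strip_column \<omega> m) = h (tasep_run K \<omega>' y m) (strip_column \<omega>' m)"
    using agree by (intro h) (simp add: strip_column_def strip_block_Suc)
  ultimately show "h (tasep_run K \<omega> y m) (strip_column \<omega> m) = h (tasep_run K \<omega>' y m) (strip_column \<omega>' m)"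
    by simp
qed

lemma depends_only_on_coupled_height:
  assumes K: "0 \<le> K"
  shows "depends_only_on (strip_block K m) (\<lambda>\<omega>. coupled_height K \<omega> y m j)"
proof (induction m)
  case (Suc m)
  have fired: "depends_only_on (strip_block K (Suc m)) (\<lambda>\<omega>. j \<in> fired K (tasep_run K \<omega> y m) (strip_column \<omega> m))"
    using fired_cong[OF K] by (intro depends_only_on_tasep_run_column[OF K]) metis
  show ?case
  proof (rule depends_only_onI)
    fix \<omega> \<omega>' :: "int \<times> int \<Rightarrow> bool" assume agree: "\<And>e. e \<in> strip_block K (Suc m) \<Longrightarrow> \<omega> e = \<omega>' e"
    have "coupled_height K \<omega> y m j = coupled_height K \<omega>' y m j"
      using agree by (intro depends_only_onD[OF Suc.IH]) (simp add: strip_block_Suc)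
    then show "coupled_height K \<omega> y (Suc m) j = coupled_height K \<omega>' y (Suc m) j"
      using depends_only_onD[OF fired agree] by simp
  qed
qed (simp add: depends_only_on_def)

lemma open_path_fst_le: "open_path K \<omega> x z L \<Longrightarrow> fst x \<le> fst z"
  by (induction rule: open_path.induct) (auto simp: cross_step_def)

lemma open_path_cong:
  assumes "open_path K \<omega> x z L"
    and "\<And>e. fst x \<le> fst e \<Longrightarrow> fst e < fst z \<Longrightarrow> -K \<le> snd e \<Longrightarrow> snd e \<le> K \<Longrightarrow> \<omega> e = \<omega>' e"
  shows "open_path K \<omega>' x z L"
  using assms
proof (induction rule: open_path.induct)
  case refl
  show ?case by (rule open_path.refl)
next
  case (step x u L z c)
  have "fst x \<le> fst u" "fst u \<le> fst z"
    using open_path_fst_le[OF step.hyps(1)] step.hyps(2) unfolding cross_step_def by auto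
  then have "open_path K \<omega>' x u L" using step.IH step.prems by force
  moreover have "cross_step K \<omega>' u z c"
    using step.hyps(2) step.prems[of u] \<open>fst x \<le> fst u\<close> unfolding cross_step_def by auto
  ultimately show ?case by (rule open_path.step)
qed

lemma depends_only_on_cross_dist: "depends_only_on (strip_block K n) (\<lambda>\<omega>. cross_dist K \<omega> (int n, j))"
proof (rule depends_only_onI)
  fix \<omega> \<omega>' :: "int \<times> int \<Rightarrow> bool" assume agree: "\<And>e. e \<in> strip_block K n \<Longrightarrow> \<omega> e = \<omega>' e"
  have "open_path K \<omega> (0, 0) (int n, j) L \<longleftrightarrow> open_path K \<omega>' (0, 0) (int n, j) L" for L
    using open_path_cong[of K \<omega> "(0, 0)" "(int n, j)" L \<omega>'] open_path_cong[of K \<omega>' "(0, 0)" "(int n, j)" L \<omega>]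
      agree[of "(fst e, snd e)" for e]
    by (auto simp: strip_block_def)
  then have "open_path K \<omega> (0, 0) (int n, j) = open_path K \<omega>' (0, 0) (int n, j)" by (rule ext)
  then show "cross_dist K \<omega> (int n, j) = cross_dist K \<omega>' (int n, j)"
    unfolding cross_dist_def by simp
qed

lemma integrable_cross_measure:
  "depends_only_on (strip_block K n) f \<Longrightarrow> integrable (cross_measure \<epsilon>) (f :: _ \<Rightarrow> real)"
  unfolding cross_measure_def by (rule integrable_PiM_measure_pmf_finite[OF finite_strip_block])

lemma integrable_coupled_height:
  "0 \<le> K \<Longrightarrow> integrable (cross_measure \<epsilon>) (\<lambda>\<omega>. real_of_int (coupled_height K \<omega> y n j))"
  by (rule integrable_cross_measure[OF depends_only_on_comp[OF depends_only_on_coupled_height]])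

lemma integrable_cross_dist: "integrable (cross_measure \<epsilon>) (\<lambda>\<omega>. real (cross_dist K \<omega> (int n, j)))"
  by (rule integrable_cross_measure[OF depends_only_on_comp[OF depends_only_on_cross_dist]])

lemma integral_cross_measure:
  "depends_only_on (strip_block K n) (f :: _ \<Rightarrow> real) \<Longrightarrow>
    (\<integral>\<omega>. f \<omega> \<partial>cross_measure \<epsilon>) = (\<integral>\<omega>. f \<omega> \<partial>Pi_pmf (strip_block K n) False (\<lambda>_. bernoulli_pmf (1 - \<epsilon>)))"
  unfolding cross_measure_def by (rule integral_PiM_eq_integral_Pi_pmf[OF finite_strip_block])

lemma integral_cross_measure_column:
  fixes h :: "(int \<Rightarrow> bool) \<Rightarrow> (int \<Rightarrow> bool) \<Rightarrow> real"
  assumes K: "0 \<le> K" and h: "\<And>y c c'. (\<And>b. b \<in> {-K..K} \<Longrightarrow> c b = c' b) \<Longrightarrow> h y c = h y c'"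
  shows "(\<integral>\<omega>. h (tasep_run K \<omega> y m) (strip_column \<omega> m) \<partial>cross_measure \<epsilon>) =
    (\<integral>\<omega>. (\<integral>c. h (tasep_run K \<omega> y m) c \<partial>column_pmf K \<epsilon>) \<partial>cross_measure \<epsilon>)"
proof -
  let ?p = "\<lambda>_. bernoulli_pmf (1 - \<epsilon>)" and ?run = "\<lambda>\<omega>. tasep_run K \<omega> y m"
  let ?B = "strip_block K m" and ?C = "{int m} \<times> {-K..K}"
  have run: "?run (\<lambda>e. if e \<in> ?B then x e else z e) = ?run x" for x z
    by (rule depends_only_onD[OF depends_only_on_tasep_run[OF K]]) simp
  have column_merge: "strip_column (\<lambda>e. if e \<in> ?B then x e else z e) m = strip_column z m" for x z
    by (auto simp: strip_column_def strip_block_def)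
  have column: "map_pmf (\<lambda>z. strip_column z m) (Pi_pmf ?C False ?p) = column_pmf K \<epsilon>"
    unfolding column_pmf_def
    by (subst Pi_pmf_bij_betw[where h = "\<lambda>j. (int m, j)" and B = ?C])
      (auto simp: bij_betw_def inj_on_def o_def strip_column_def[abs_def])
  have "(\<integral>\<omega>. h (?run \<omega>) (strip_column \<omega> m) \<partial>cross_measure \<epsilon>) =
      (\<integral>\<omega>. h (?run \<omega>) (strip_column \<omega> m) \<partial>Pi_pmf (?B \<union> ?C) False ?p)"
    unfolding strip_block_Suc[symmetric]
    by (rule integral_cross_measure[OF depends_only_on_tasep_run_column[OF K h]])
  also have "\<dots> = (\<integral>x. (\<integral>z. h (?run (\<lambda>e. if e \<in> ?B then x e else z e))
      (strip_column (\<lambda>e. if e \<in> ?B then x e else z e) m) \<partial>Pi_pmf ?C False ?p) \<partial>Pi_pmf ?B False ?p)"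
    by (rule integral_Pi_pmf_union) (auto simp: strip_block_def)
  also have "\<dots> = (\<integral>x. (\<integral>z. h (?run x) (strip_column z m) \<partial>Pi_pmf ?C False ?p) \<partial>Pi_pmf ?B False ?p)"
    unfolding run column_merge ..
  also have "\<dots> = (\<integral>\<omega>. (\<integral>c. h (?run \<omega>) c \<partial>column_pmf K \<epsilon>) \<partial>Pi_pmf ?B False ?p)"
    by (simp flip: column)
  also have "\<dots> = (\<integral>\<omega>. (\<integral>c. h (?run \<omega>) c \<partial>column_pmf K \<epsilon>) \<partial>cross_measure \<epsilon>)"
    by (rule integral_cross_measure[symmetric, OF depends_only_on_comp[OF depends_only_on_tasep_run[OF K]]])
  finally show ?thesis .
qed

lemma finite_tasep_states: "finite (tasep_states K)"
proof (rule finite_subset)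
  show "tasep_states K \<subseteq> (\<lambda>S j. j \<in> S) ` Pow {-K+1..K}"
  proof
    fix y assume "y \<in> tasep_states K"
    then have "y = (\<lambda>j. j \<in> {j\<in>{-K+1..K}. y j})" unfolding tasep_states_def by auto
    then show "y \<in> (\<lambda>S j. j \<in> S) ` Pow {-K+1..K}" by blast
  qed
qed simp

lemma pmf_fired:
  assumes K: "0 \<le> K" and \<epsilon>: "0 < \<epsilon>" "\<epsilon> < 1" and F: "F \<subseteq> tasep_active K y"
  shows "pmf (map_pmf (fired K y) (column_pmf K \<epsilon>)) F =
    \<epsilon> ^ card F * (1 - \<epsilon>) ^ (card (tasep_active K y) - card F)"
proof -
  let ?A = "tasep_active K y"
  have A: "finite ?A" "?A \<subseteq> {-K..K}"
    using tasep_active_subset[OF K] by (auto intro: finite_subset)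
  have "map_pmf (fired K y) (column_pmf K \<epsilon>) =
      map_pmf (\<lambda>b. {x\<in>?A. \<not> b x}) (Pi_pmf ?A False (\<lambda>_. bernoulli_pmf (1 - \<epsilon>)))"
    unfolding column_pmf_def Pi_pmf_subset[OF finite_atLeastAtMost_int A(2)] pmf.map_comp
    by (rule map_pmf_cong) (auto simp: fired_def)
  then show ?thesis using pmf_Pi_pmf_bernoulli_failures[OF A(1) F, of "1 - \<epsilon>"] \<epsilon> by simp
qed

lemma integral_column_tasep_step:
  fixes \<phi> :: "(int \<Rightarrow> bool) \<Rightarrow> real"
  assumes K: "0 \<le> K" and \<epsilon>: "0 < \<epsilon>" "\<epsilon> < 1"
  shows "(\<integral>c. \<phi> (tasep_step K y c) \<partial>column_pmf K \<epsilon>) = (\<Sum>y'\<in>tasep_states K. tasep_P K \<epsilon> y y' * \<phi> y')"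
proof -
  let ?A = "tasep_active K y"
  let ?w = "\<lambda>F. \<epsilon> ^ card F * (1 - \<epsilon>) ^ (card ?A - card F)"
  have "finite ?A" using tasep_active_subset[OF K] by (auto intro: finite_subset)
  have "(\<integral>c. \<phi> (tasep_step K y c) \<partial>column_pmf K \<epsilon>) =
      (\<integral>F. \<phi> (tasep_update K y F) \<partial>map_pmf (fired K y) (column_pmf K \<epsilon>))"
    by (simp add: tasep_step_def)
  also have "\<dots> = (\<Sum>F\<in>Pow ?A. \<phi> (tasep_update K y F) * pmf (map_pmf (fired K y) (column_pmf K \<epsilon>)) F)"
    by (rule integral_measure_pmf_real) (auto simp: \<open>finite ?A\<close> fired_def)
  also have "\<dots> = (\<Sum>F\<in>Pow ?A. \<Sum>y'\<in>tasep_states K. if tasep_update K y F = y' then ?w F * \<phi> y' else 0)"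
    by (intro sum.cong refl)
      (auto simp: pmf_fired K \<epsilon> finite_tasep_states sum.delta' tasep_update_in_states mult.commute)
  also have "\<dots> = (\<Sum>y'\<in>tasep_states K. tasep_P K \<epsilon> y y' * \<phi> y')"
    unfolding tasep_P_def sum_distrib_right by (subst sum.swap) (auto intro!: sum.cong)
  finally show ?thesis .
qed

lemma integral_column_height_gain:
  assumes K: "1 \<le> K" and \<epsilon>: "0 < \<epsilon>" "\<epsilon> < 1"
  shows "(\<integral>c. 1 + 2 * of_bool (0 \<in> fired K y c) \<partial>column_pmf K \<epsilon>) = 1 + 2 * \<epsilon> * of_bool (y 0 \<and> \<not> y 1)"
proof -
  have "0 \<in> tasep_active K y \<longleftrightarrow> y 0 \<and> \<not> y 1" using K unfolding tasep_active_def by auto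
  then have "(\<integral>c. 1 + 2 * of_bool (0 \<in> fired K y c) \<partial>column_pmf K \<epsilon>) =
      (\<integral>c. (1 + 2 * of_bool (y 0 \<and> \<not> y 1 \<and> \<not> c 0) :: real) \<partial>column_pmf K \<epsilon>)"
    by (simp add: fired_def)
  also have "\<dots> = (\<integral>b. (1 + 2 * of_bool (y 0 \<and> \<not> y 1 \<and> \<not> b) :: real) \<partial>map_pmf (\<lambda>c. c 0) (column_pmf K \<epsilon>))"
    by simp
  also have "map_pmf (\<lambda>c. c 0) (column_pmf K \<epsilon>) = bernoulli_pmf (1 - \<epsilon>)"
    unfolding column_pmf_def using K by (subst Pi_pmf_component) auto
  finally show ?thesis using \<epsilon> by (simp add: algebra_simps)
qed

lemma tasep_stationaryD:
  assumes "tasep_stationary K \<epsilon> \<nu>"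
  shows "\<And>y. y \<in> tasep_states K \<Longrightarrow> 0 \<le> \<nu> y" and "(\<Sum>y\<in>tasep_states K. \<nu> y) = 1"
    and "\<And>y'. y' \<in> tasep_states K \<Longrightarrow> (\<Sum>y\<in>tasep_states K. \<nu> y * tasep_P K \<epsilon> y y') = \<nu> y'"
  using assms unfolding tasep_stationary_def by (blast, blast, metis)

lemma prob_space_cross_measure: "prob_space (cross_measure \<epsilon>)"
  unfolding cross_measure_def by (rule prob_space_PiM) (rule measure_pmf.prob_space_axioms)

lemma stationary_tasep_run:
  fixes \<phi> :: "(int \<Rightarrow> bool) \<Rightarrow> real"
  assumes \<nu>: "tasep_stationary K \<epsilon> \<nu>" and K: "0 \<le> K" and \<epsilon>: "0 < \<epsilon>" "\<epsilon> < 1"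
  shows "(\<Sum>y\<in>tasep_states K. \<nu> y * (\<integral>\<omega>. \<phi> (tasep_run K \<omega> y m) \<partial>cross_measure \<epsilon>)) =
    (\<Sum>y\<in>tasep_states K. \<nu> y * \<phi> y)"
proof (induction m arbitrary: \<phi>)
  case 0
  then show ?case by (simp add: prob_space.prob_space[OF prob_space_cross_measure])
next
  case (Suc m)
  let ?S = "tasep_states K"
  define H where "H y' = (\<integral>c. \<phi> (tasep_step K y' c) \<partial>column_pmf K \<epsilon>)" for y'
  have step_cong: "\<phi> (tasep_step K y' c) = \<phi> (tasep_step K y' c')"
    if "\<And>b. b \<in> {-K..K} \<Longrightarrow> c b = c' b" for y' c c'
    using tasep_step_cong[OF K that] by simp
  have "(\<integral>\<omega>. \<phi> (tasep_run K \<omega> y (Suc m)) \<partial>cross_measure \<epsilon>) =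
      (\<integral>\<omega>. H (tasep_run K \<omega> y m) \<partial>cross_measure \<epsilon>)" for y
    unfolding H_def tasep_run.simps
    by (rule integral_cross_measure_column[where h = "\<lambda>y' c. \<phi> (tasep_step K y' c)", OF K step_cong])
  then have "(\<Sum>y\<in>?S. \<nu> y * (\<integral>\<omega>. \<phi> (tasep_run K \<omega> y (Suc m)) \<partial>cross_measure \<epsilon>)) =
      (\<Sum>y\<in>?S. \<nu> y * H y)"
    using Suc.IH by simp
  also have "\<dots> = (\<Sum>y\<in>?S. \<nu> y * (\<Sum>y'\<in>?S. tasep_P K \<epsilon> y y' * \<phi> y'))"
    unfolding H_def integral_column_tasep_step[OF K \<epsilon>] ..
  also have "\<dots> = (\<Sum>y'\<in>?S. (\<Sum>y\<in>?S. \<nu> y * tasep_P K \<epsilon> y y') * \<phi> y')"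
    unfolding sum_distrib_left sum_distrib_right mult.assoc by (rule sum.swap)
  also have "\<dots> = (\<Sum>y'\<in>?S. \<nu> y' * \<phi> y')"
    by (simp add: tasep_stationaryD(3)[OF \<nu>])
  finally show ?case .
qed

lemma sum_stationary_height_gain:
  assumes "tasep_stationary K \<epsilon> \<nu>"
  shows "(\<Sum>y\<in>tasep_states K. \<nu> y * (1 + 2 * \<epsilon> * of_bool (y 0 \<and> \<not> y 1))) = 1 + 2 * \<epsilon> * nu_occ_emp K \<nu>"
proof -
  have "\<nu> y * (1 + 2 * \<epsilon> * of_bool (y 0 \<and> \<not> y 1)) = \<nu> y + 2 * \<epsilon> * (if y 0 \<and> \<not> y 1 then \<nu> y else 0)" for y
    by (simp add: algebra_simps)
  then have "(\<Sum>y\<in>tasep_states K. \<nu> y * (1 + 2 * \<epsilon> * of_bool (y 0 \<and> \<not> y 1))) =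
      (\<Sum>y\<in>tasep_states K. \<nu> y) + 2 * \<epsilon> * (\<Sum>y\<in>tasep_states K. if y 0 \<and> \<not> y 1 then \<nu> y else 0)"
    by (simp add: sum.distrib sum_distrib_left)
  then show ?thesis
    unfolding nu_occ_emp_def by (simp add: tasep_stationaryD(2)[OF assms] sum.inter_filter finite_tasep_states)
qed

lemma expected_coupled_height:
  assumes \<nu>: "tasep_stationary K \<epsilon> \<nu>" and K: "1 \<le> K" and \<epsilon>: "0 < \<epsilon>" "\<epsilon> < 1"
  shows "(\<Sum>y\<in>tasep_states K. \<nu> y * (\<integral>\<omega>. real_of_int (coupled_height K \<omega> y n 0) \<partial>cross_measure \<epsilon>)) =
    real n * (1 + 2 * \<epsilon> * nu_occ_emp K \<nu>)"
proof (induction n)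
  case 0
  then show ?case by simp
next
  case (Suc n)
  let ?S = "tasep_states K" and ?\<mu> = "cross_measure \<epsilon>"
  let ?gain = "\<lambda>y c. 1 + 2 * of_bool (0 \<in> fired K y c) :: real"
  let ?mean_gain = "\<lambda>y. 1 + 2 * \<epsilon> * of_bool (y 0 \<and> \<not> y 1)"
  have gain_cong: "?gain y c = ?gain y c'" if "\<And>b. b \<in> {-K..K} \<Longrightarrow> c b = c' b" for y c c'
    using fired_cong[OF _ that] K by simp
  have step: "(\<integral>\<omega>. real_of_int (coupled_height K \<omega> y (Suc n) 0) \<partial>?\<mu>) =
      (\<integral>\<omega>. real_of_int (coupled_height K \<omega> y n 0) \<partial>?\<mu>) + (\<integral>\<omega>. ?mean_gain (tasep_run K \<omega> y n) \<partial>?\<mu>)" for y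
  proof -
    have "(\<integral>\<omega>. real_of_int (coupled_height K \<omega> y (Suc n) 0) \<partial>?\<mu>) =
        (\<integral>\<omega>. real_of_int (coupled_height K \<omega> y n 0) + ?gain (tasep_run K \<omega> y n) (strip_column \<omega> n) \<partial>?\<mu>)"
      by (simp add: add.assoc)
    also have "\<dots> = (\<integral>\<omega>. real_of_int (coupled_height K \<omega> y n 0) \<partial>?\<mu>) +
        (\<integral>\<omega>. ?gain (tasep_run K \<omega> y n) (strip_column \<omega> n) \<partial>?\<mu>)"
      using K by (intro Bochner_Integration.integral_add integrable_coupled_height
          integrable_cross_measure[OF depends_only_on_tasep_run_column[where h = ?gain, OF _ gain_cong]]) auto
    also have "(\<integral>\<omega>. ?gain (tasep_run K \<omega> y n) (strip_column \<omega> n) \<partial>?\<mu>) =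
        (\<integral>\<omega>. ?mean_gain (tasep_run K \<omega> y n) \<partial>?\<mu>)"
      using integral_cross_measure_column[where h = ?gain, OF _ gain_cong] K
      by (simp add: integral_column_height_gain[OF K \<epsilon>])
    finally show ?thesis .
  qed
  have "(\<Sum>y\<in>?S. \<nu> y * (\<integral>\<omega>. real_of_int (coupled_height K \<omega> y (Suc n) 0) \<partial>?\<mu>)) =
      (\<Sum>y\<in>?S. \<nu> y * (\<integral>\<omega>. real_of_int (coupled_height K \<omega> y n 0) \<partial>?\<mu>)) +
      (\<Sum>y\<in>?S. \<nu> y * (\<integral>\<omega>. ?mean_gain (tasep_run K \<omega> y n) \<partial>?\<mu>))"
    unfolding step distrib_left by (rule sum.distrib)
  also have "(\<Sum>y\<in>?S. \<nu> y * (\<integral>\<omega>. ?mean_gain (tasep_run K \<omega> y n) \<partial>?\<mu>)) = 1 + 2 * \<epsilon> * nu_occ_emp K \<nu>"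
    using stationary_tasep_run[where \<phi> = ?mean_gain, OF \<nu> _ \<epsilon>] K sum_stationary_height_gain[OF \<nu>] by simp
  finally show ?case using Suc.IH by (simp add: algebra_simps)
qed

lemma weighted_average_bounds:
  fixes w e :: "'a \<Rightarrow> real"
  assumes "finite S" "\<And>y. y \<in> S \<Longrightarrow> 0 \<le> w y" "(\<Sum>y\<in>S. w y) = 1"
    and "\<And>y. y \<in> S \<Longrightarrow> e y \<le> a \<and> a \<le> e y + C"
  shows "(\<Sum>y\<in>S. w y * e y) \<le> a" and "a \<le> (\<Sum>y\<in>S. w y * e y) + C"
proof -
  have "(\<Sum>y\<in>S. w y * e y) \<le> (\<Sum>y\<in>S. w y * a)"
    using assms by (intro sum_mono mult_left_mono) auto
  then show "(\<Sum>y\<in>S. w y * e y) \<le> a" using assms(3) by (simp add: sum_distrib_right[symmetric])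
  have "(\<Sum>y\<in>S. w y * a) \<le> (\<Sum>y\<in>S. w y * (e y + C))"
    using assms by (intro sum_mono mult_left_mono) auto
  then show "a \<le> (\<Sum>y\<in>S. w y * e y) + C"
    using assms(3) by (simp add: sum_distrib_right[symmetric] distrib_left sum.distrib)
qed

lemma expected_cross_dist_bounds:
  assumes \<nu>: "tasep_stationary K \<epsilon> \<nu>" and K: "1 \<le> K" and \<epsilon>: "0 < \<epsilon>" "\<epsilon> < 1" and n: "nat K \<le> n"
  shows "\<bar>(\<integral>\<omega>. real (cross_dist K \<omega> (int n, 0)) \<partial>cross_measure \<epsilon>) -
    real n * (1 + 2 * \<epsilon> * nu_occ_emp K \<nu>)\<bar> \<le> 3 * K"
proof -
  interpret prob_space "cross_measure \<epsilon>" by (rule prob_space_cross_measure)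
  let ?D = "\<integral>\<omega>. real (cross_dist K \<omega> (int n, 0)) \<partial>cross_measure \<epsilon>"
  let ?V = "\<lambda>y. \<integral>\<omega>. real_of_int (coupled_height K \<omega> y n 0) \<partial>cross_measure \<epsilon>"
  have integrable_D_V: "integrable (cross_measure \<epsilon>) (\<lambda>\<omega>. real (cross_dist K \<omega> (int n, 0)))"
    "integrable (cross_measure \<epsilon>) (\<lambda>\<omega>. real_of_int (coupled_height K \<omega> y n 0))" for y
    using K by (simp_all add: integrable_cross_dist integrable_coupled_height)
  have pointwise: "real_of_int (coupled_height K \<omega> y n 0) \<le> real (cross_dist K \<omega> (int n, 0))"
    "real (cross_dist K \<omega> (int n, 0)) \<le> real_of_int (coupled_height K \<omega> y n 0) + 3 * K" for \<omega> y
  proof -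
    have "real_of_int (coupled_height K \<omega> y n 0) \<le> real_of_int (int (cross_dist K \<omega> (int n, 0)))"
      "real_of_int (int (cross_dist K \<omega> (int n, 0))) \<le> real_of_int (coupled_height K \<omega> y n 0 + 3 * K)"
      using cross_dist_bounds[OF K n, of \<omega> y] by (simp_all only: of_int_le_iff)
    then show "real_of_int (coupled_height K \<omega> y n 0) \<le> real (cross_dist K \<omega> (int n, 0))"
      "real (cross_dist K \<omega> (int n, 0)) \<le> real_of_int (coupled_height K \<omega> y n 0) + 3 * K"
      by simp_all
  qed
  have bounds: "?V y \<le> ?D \<and> ?D \<le> ?V y + 3 * K" for y
  proof
    show "?V y \<le> ?D"
      using pointwise(1) by (intro integral_mono integrable_D_V)
    have "?D \<le> (\<integral>\<omega>. real_of_int (coupled_height K \<omega> y n 0) + 3 * K \<partial>cross_measure \<epsilon>)"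
      using pointwise(2) integrable_D_V by (intro integral_mono) auto
    then show "?D \<le> ?V y + 3 * K"
      using integrable_D_V by (simp add: prob_space)
  qed
  have "(\<Sum>y\<in>tasep_states K. \<nu> y * ?V y) \<le> ?D" "?D \<le> (\<Sum>y\<in>tasep_states K. \<nu> y * ?V y) + 3 * K"
    using weighted_average_bounds[OF finite_tasep_states tasep_stationaryD(1,2)[OF \<nu>] bounds] by auto
  then show ?thesis unfolding expected_coupled_height[OF \<nu> K \<epsilon>] by linarith
qed

lemma LIMSEQ_divide_of_bounded_deviation:
  fixes a :: "nat \<Rightarrow> real"
  assumes "eventually (\<lambda>n. \<bar>a n - real n * c\<bar> \<le> C) sequentially"
  shows "(\<lambda>n. a n / real n) \<longlonglongrightarrow> c"
proof -
  have "eventually (\<lambda>n. norm (a n / real n - c) \<le> C / real n) sequentially"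
    using assms eventually_gt_at_top[of 0]
  proof eventually_elim
    case (elim n)
    then have "a n / real n - c = (a n - real n * c) / real n" by (simp add: field_simps)
    then show ?case using elim by (simp add: divide_right_mono)
  qed
  from Lim_null_comparison[OF this lim_const_over_n] show ?thesis
    by (rule LIM_zero_cancel)
qed

theorem proposition4:
  fixes K :: int and \<epsilon> :: real and \<nu> :: "(int \<Rightarrow> bool) \<Rightarrow> real"
  assumes "K \<ge> 1" and "0 < \<epsilon>" and "\<epsilon> < 1"
    and "tasep_stationary K \<epsilon> \<nu>"
  shows "(\<lambda>n::nat. (\<integral>\<omega>. real (cross_dist K \<omega> (int n, 0)) \<partial>cross_measure \<epsilon>) / real n)
           \<longlonglongrightarrow> 1 + 2 * \<epsilon> * nu_occ_emp K \<nu>"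
  using expected_cross_dist_bounds[OF assms(4,1-3)]
  by (intro LIMSEQ_divide_of_bounded_deviation eventually_sequentiallyI)

end
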